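(* Let $\mathcal{C}$ be a $q$-ary cyclic code of length $n$ and let $\mathcal{L}$ be a cyclic code of length $n_\ell$ and minimum distance $d_\ell$ over $\mathbb{F}_{q_\ell}=\mathbb{F}_{q^u}$, with $\gcd(n,n_\ell)=1$, which is a non-zero-locator code of $\mathcal{C}$ with integers $\mu$ and $e$ (with respect to $\alpha$ of order $n$ in $\mathbb{F}_{q^s}$ and $\beta$ of order $n_\ell$ in $\mathbb{F}_{q^{us_\ell}}$; let $r=\mathrm{lcm}(s,us_\ell)$). Let $a(x)=\sum_{j\in\mathcal{Z}}a_jx^j\in\mathcal{L}$ be a codeword with support $\mathcal{Z}$, $|\mathcal{Z}|=d_\ell$, and define $f(x)=\prod_{j\in\mathcal{Z}}(1-x\beta^j)$ and $h(x)=\sum_{j\in\mathcal{Z}}a_j\prod_{\ell\in\mathcal{Z},\ell\ne j}(1-x\beta^\ell)$. Fix $\kappa\in\mathcal{Z}$ and put $\gamma_i=\beta^{-\kappa}\alpha^{-i}$ for $i=0,\dots,n-1$. Let $\mathcal{E}\subseteq\{0,\dots,n-1\}$ be a set of error positions and $e_i\in\mathbb{F}_q$, $i\in\mathcal{E}$, the error values, and define $$\Lambda(x)=\prod_{i\in\mathcal{E}}f(x\alpha^i),\qquad \Omega(x)=\sum_{i\in\mathcal{E}}\Big(e_i\alpha^{ie}h(x\alpha^i)\prod_{\ell\in\mathcal{E},\ell\ne i}f(x\alpha^\ell)\Big)$$ in $\mathbb{F}_{q^r}[x]$. Then for every $i\in\mathcal{E}$, $$e_i=\frac{\Omega(\gamma_i)}{\alpha^{ie}\,h(\gamma_i\alpha^i)\prod_{\ell\in\mathcal{E},\ell\ne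 i}f(\gamma_i\alpha^\ell)}=\frac{\Omega(\gamma_i)\,\alpha^{i}\,f'(\gamma_i\alpha^i)}{\Lambda'(\gamma_i)\,\alpha^{ie}\,h(\gamma_i\alpha^i)},$$ where $f'$ and $\Lambda'$ denote formal derivatives.
   Context: A $q$-ary cyclic code of length $n$ ($\gcd(n,q)=1$) is an ideal of $\mathbb{F}_q[x]/(x^n-1)$, codewords identified with polynomials of degree $<n$. Non-zero-locator code: with $\mathcal{C}$, $\mathcal{L}$, $\alpha$, $\beta$ as in the claim, $\mathcal{L}$ is a non-zero-locator code of $\mathcal{C}$ if there exist an integer $\mu\ge 2$ and an integer $e$ such that for all $a(x)\in\mathcal{L}$ and all $c(x)\in\mathcal{C}$, $\sum_{j\ge0}c(\alpha^{j+e})a(\beta^j)x^j\equiv 0\pmod{x^{\mu-1}}$ as formal power series. *)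

theory Defs
  imports "HOL-Computational_Algebra.Polynomial"
begin

definition is_subfield :: "'a::field set \<Rightarrow> bool" where
  "is_subfield K \<longleftrightarrow> 0 \<in> K \<and> 1 \<in> K \<and>
     (\<forall>x\<in>K. \<forall>y\<in>K. x + y \<in> K \<and> x * y \<in> K) \<and>
     (\<forall>x\<in>K. - x \<in> K \<and> inverse x \<in> K)"

definition mult_order_is :: "'a::field \<Rightarrow> nat \<Rightarrow> bool" where
  "mult_order_is x n \<longleftrightarrow> 0 < n \<and> x ^ n = 1 \<and> (\<forall>k. 0 < k \<and> k < n \<longrightarrow> x ^ k \<noteq> 1)"

(* A cyclic code of length n over the subfield K: an ideal of K[x]/(x^n - 1),
   codewords identified with polynomials of degree < n with coefficients in K.
   (K-linear subspace closed under multiplication by x modulo x^n - 1.) *)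
definition cyclic_code :: "'a::field set \<Rightarrow> nat \<Rightarrow> 'a poly set \<Rightarrow> bool" where
  "cyclic_code K n C \<longleftrightarrow>
     0 \<in> C \<and>
     (\<forall>c\<in>C. degree c < n \<and> (\<forall>j. coeff c j \<in> K)) \<and>
     (\<forall>c\<in>C. \<forall>d\<in>C. c + d \<in> C) \<and>
     (\<forall>k\<in>K. \<forall>c\<in>C. smult k c \<in> C) \<and>
     (\<forall>c\<in>C. (pCons 0 c) mod (monom 1 n - 1) \<in> C)"

definition support :: "'a::zero poly \<Rightarrow> nat set" where
  "support p = {j. coeff p j \<noteq> 0}"

definition weight :: "'a::zero poly \<Rightarrow> nat" where
  "weight p = card (support p)"

definition min_distance :: "'a::zero poly set \<Rightarrow> nat" where
  "min_distance C = Min {weight c | c. c \<in> C \<and> c \<noteq> 0}"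

(* L is a non-zero-locator code of C with integers mu and e (w.r.t. alpha, beta):
   the formal power series  sum_j c(alpha^(j+e)) a(beta^j) x^j  vanishes mod x^(mu-1),
   i.e. its coefficients of index j < mu - 1 are zero. *)
definition nonzero_locator_with ::
  "'a::field poly set \<Rightarrow> 'a poly set \<Rightarrow> 'a \<Rightarrow> 'a \<Rightarrow> nat \<Rightarrow> int \<Rightarrow> bool" where
  "nonzero_locator_with C L \<alpha> \<beta> \<mu> e \<longleftrightarrow> 2 \<le> \<mu> \<and>
     (\<forall>a\<in>L. \<forall>c\<in>C. \<forall>j. j < \<mu> - 1 \<longrightarrow>
        poly c (\<alpha> powi (int j + e)) * poly a (\<beta> ^ j) = 0)"

end

theory Submission
  imports Defs "HOL-Number_Theory.Cong"
begin

text \<open>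
  At \<open>\<gamma>\<^sub>i\<close> the factor \<open>f(x\<alpha>\<^sup>i)\<close> of \<open>\<Lambda>\<close> vanishes, while the other factors
  \<open>f(\<gamma>\<^sub>i\<alpha>\<^sup>l)\<close>, \<open>l \<noteq> i\<close>, do not: \<open>\<beta>\<^sup>j\<alpha>\<^sup>l = \<beta>\<^sup>\<kappa>\<alpha>\<^sup>i\<close> forces \<open>l = i\<close> after
  raising to the power \<open>n\<^sub>\<ell>\<close>, since \<open>gcd(n, n\<^sub>\<ell>) = 1\<close>. Hence only the \<open>i\<close>-th terms
  of \<open>\<Omega>(\<gamma>\<^sub>i)\<close> and of \<open>\<Lambda>'(\<gamma>\<^sub>i)\<close> survive, and it remains to see that \<open>h\<close> and \<open>f'\<close>
  do not vanish at the root \<open>\<beta>\<^sup>-\<^sup>\<kappa>\<close> of \<open>f\<close>; there too only the \<open>\<kappa>\<close>-th summand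
  survives, a nonzero multiple of \<open>\<Prod>\<^bsub>l\<in>Z-{\<kappa>}\<^esub>(1 - \<beta>\<^sup>l\<^sup>-\<^sup>\<kappa>)\<close>.
\<close>

lemma mult_order_is_nonzero:
  fixes x :: "'a::field"
  assumes "mult_order_is x n"
  shows "x \<noteq> 0"
  using assms unfolding mult_order_is_def by (metis power_0_left zero_neq_one gr_implies_not0)

lemma mult_order_is_dvd:
  fixes x :: "'a::field"
  assumes "mult_order_is x n" "x ^ k = 1"
  shows "n dvd k"
proof -
  have n: "0 < n" "x ^ n = 1" "\<forall>k. 0 < k \<and> k < n \<longrightarrow> x ^ k \<noteq> 1"
    using assms(1) unfolding mult_order_is_def by auto
  have "x ^ k = (x ^ n) ^ (k div n) * x ^ (k mod n)"
    by (metis div_mult_mod_eq power_add power_mult mult.commute)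
  with n(2) assms(2) have "x ^ (k mod n) = 1" by simp
  with n(1,3) have "k mod n = 0" by (meson mod_less_divisor neq0_conv)
  then show ?thesis by auto
qed

lemma mult_order_is_pow_cong:
  fixes x :: "'a::field"
  assumes "mult_order_is x n" "x ^ a = x ^ b"
  shows "[a = b] (mod n)"
proof -
  have "[a = b] (mod n)" if "b \<le> a" "x ^ a = x ^ b" for a b
  proof -
    have "x ^ (a - b) * x ^ b = x ^ b"
      using that by (simp add: power_add[symmetric])
    then have "x ^ (a - b) = 1"
      using mult_order_is_nonzero[OF assms(1)] by simp
    then have "n dvd a - b" using mult_order_is_dvd[OF assms(1)] by blast
    then show ?thesis using that(1) cong_altdef_nat by blast
  qed
  then show ?thesis using assms(2) by (metis cong_sym nat_le_linear)
qed

lemma mult_order_is_pow_inj: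
  fixes x :: "'a::field"
  assumes "mult_order_is x n" "x ^ a = x ^ b" "a < n" "b < n"
  shows "a = b"
  using mult_order_is_pow_cong[OF assms(1,2)] assms(3,4) cong_less_modulus_unique_nat by blast

lemma coprime_orders_pow_product_cancel:
  fixes \<alpha> \<beta> :: "'a::field"
  assumes "mult_order_is \<alpha> n" "mult_order_is \<beta> n'" "coprime n n'"
    and "\<beta> ^ j * \<alpha> ^ l = \<beta> ^ k * \<alpha> ^ i" "l < n" "i < n"
  shows "l = i"
proof -
  have \<beta>: "\<beta> ^ n' = 1" using assms(2) unfolding mult_order_is_def by auto
  have "(\<beta> ^ n') ^ j * \<alpha> ^ (l * n') = (\<beta> ^ n') ^ k * \<alpha> ^ (i * n')"
    using arg_cong[OF assms(4), of "\<lambda>z. z ^ n'"]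
    by (simp add: power_mult_distrib power_mult[symmetric] mult.commute)
  then have "[l * n' = i * n'] (mod n)"
    using \<beta> mult_order_is_pow_cong[OF assms(1)] by simp
  then have "[l = i] (mod n)"
    using cong_mult_rcancel_nat assms(3) by (metis coprime_commute)
  then show ?thesis using assms(5,6) cong_less_modulus_unique_nat by blast
qed

lemma sum_prod_remove_eq_single:
  fixes k g :: "'i \<Rightarrow> 'a::comm_semiring_1"
  assumes "finite A" "i \<in> A" "g i = 0"
  shows "(\<Sum>a\<in>A. k a * (\<Prod>b\<in>A - {a}. g b)) = k i * (\<Prod>b\<in>A - {i}. g b)"
proof -
  have "(\<Prod>b\<in>A - {a}. g b) = 0" if "a \<in> A - {i}" for a
    using that assms by (intro prod_zero) auto
  then show ?thesis
    using assms(1,2) by (simp add: sum.remove)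
qed

lemma poly_prod_linear_factors:
  fixes b :: "'i \<Rightarrow> 'a::field"
  shows "poly (\<Prod>j\<in>Z. [:1, - b j:]) x = (\<Prod>j\<in>Z. 1 - b j * x)"
  by (simp add: poly_prod mult.commute)

lemma poly_prod_linear_factors_eq_0_iff:
  fixes b :: "'i \<Rightarrow> 'a::field"
  assumes "finite Z"
  shows "poly (\<Prod>j\<in>Z. [:1, - b j:]) x = 0 \<longleftrightarrow> (\<exists>j\<in>Z. b j * x = 1)"
  using assms by (simp add: poly_prod_linear_factors prod_zero_iff)

lemma poly_pderiv_prod_linear_factors_root:
  fixes b :: "'i \<Rightarrow> 'a::field"
  assumes "finite Z" "\<kappa> \<in> Z" "b \<kappa> \<noteq> 0"
  shows "poly (pderiv (\<Prod>j\<in>Z. [:1, - b j:])) (inverse (b \<kappa>))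
           = - b \<kappa> * (\<Prod>j\<in>Z - {\<kappa>}. 1 - b j * inverse (b \<kappa>))"
proof -
  have "poly (pderiv (\<Prod>j\<in>Z. [:1, - b j:])) (inverse (b \<kappa>))
          = (\<Sum>j\<in>Z. - b j * (\<Prod>l\<in>Z - {j}. 1 - b l * inverse (b \<kappa>)))"
    by (simp add: pderiv_prod poly_sum poly_prod_linear_factors pderiv_pCons mult.commute)
  also have "\<dots> = - b \<kappa> * (\<Prod>j\<in>Z - {\<kappa>}. 1 - b j * inverse (b \<kappa>))"
    using assms by (intro sum_prod_remove_eq_single) auto
  finally show ?thesis .
qed

lemma poly_sum_smult_prod_linear_factors_root:
  fixes b c :: "'i \<Rightarrow> 'a::field"
  assumes "finite Z" "\<kappa> \<in> Z" "b \<kappa> \<noteq> 0"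
  shows "poly (\<Sum>j\<in>Z. smult (c j) (\<Prod>l\<in>Z - {j}. [:1, - b l:])) (inverse (b \<kappa>))
           = c \<kappa> * (\<Prod>j\<in>Z - {\<kappa>}. 1 - b j * inverse (b \<kappa>))"
proof -
  have "poly (\<Sum>j\<in>Z. smult (c j) (\<Prod>l\<in>Z - {j}. [:1, - b l:])) (inverse (b \<kappa>))
          = (\<Sum>j\<in>Z. c j * (\<Prod>l\<in>Z - {j}. 1 - b l * inverse (b \<kappa>)))"
    by (simp add: poly_sum poly_prod_linear_factors)
  also have "\<dots> = c \<kappa> * (\<Prod>j\<in>Z - {\<kappa>}. 1 - b j * inverse (b \<kappa>))"
    using assms by (intro sum_prod_remove_eq_single) auto
  finally show ?thesis .
qed

lemma prod_linear_factors_remove_root_nonzero: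
  fixes b :: "'i \<Rightarrow> 'a::field"
  assumes "finite Z" "\<kappa> \<in> Z" "inj_on b Z" "b \<kappa> \<noteq> 0"
  shows "(\<Prod>j\<in>Z - {\<kappa>}. 1 - b j * inverse (b \<kappa>)) \<noteq> 0"
proof
  assume "(\<Prod>j\<in>Z - {\<kappa>}. 1 - b j * inverse (b \<kappa>)) = 0"
  then obtain j where "j \<in> Z - {\<kappa>}" "b j * inverse (b \<kappa>) = 1"
    using assms(1) by (auto simp: prod_zero_iff)
  then have "j \<in> Z - {\<kappa>}" "b j = b \<kappa>"
    using assms(4) by (auto simp: field_simps)
  then show False using assms(2,3) by (auto dest: inj_onD)
qed

lemma poly_prod_linear_factors_at_other_power_nonzero:
  fixes \<alpha> \<beta> :: "'a::field"
  assumes "mult_order_is \<alpha> n" "mult_order_is \<beta> n'" "coprime n n'" "finite Z"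
    and root: "\<beta> ^ \<kappa> * (y * \<alpha> ^ i) = 1"
    and "l < n" "i < n" "l \<noteq> i"
  shows "poly (\<Prod>j\<in>Z. [:1, - (\<beta> ^ j):]) (y * \<alpha> ^ l) \<noteq> 0"
proof
  assume "poly (\<Prod>j\<in>Z. [:1, - (\<beta> ^ j):]) (y * \<alpha> ^ l) = 0"
  then obtain j where "\<beta> ^ j * (y * \<alpha> ^ l) = 1"
    using assms(4) by (auto simp: poly_prod_linear_factors_eq_0_iff)
  with root have "\<beta> ^ j * \<alpha> ^ l = \<beta> ^ \<kappa> * \<alpha> ^ i"
    by (metis mult.left_commute mult_cancel_left mult_zero_left zero_neq_one)
  then show False
    using coprime_orders_pow_product_cancel[OF assms(1-3)] assms(6-8) by blast
qed

lemma error_evaluator_at_root: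
  fixes f h \<Lambda> \<Omega> :: "'a::field poly" and t w err :: "'i \<Rightarrow> 'a"
  assumes "finite E" "i \<in> E"
    and \<Lambda>: "\<Lambda> = (\<Prod>k\<in>E. pcompose f [:0, t k:])"
    and \<Omega>: "\<Omega> = (\<Sum>k\<in>E. smult (err k * w k)
                   (pcompose h [:0, t k:] * (\<Prod>l\<in>E - {k}. pcompose f [:0, t l:])))"
    and root: "poly f (y * t i) = 0"
    and others: "\<And>l. l \<in> E \<Longrightarrow> l \<noteq> i \<Longrightarrow> poly f (y * t l) \<noteq> 0"
    and nonzero: "w i \<noteq> 0" "t i \<noteq> 0" "poly h (y * t i) \<noteq> 0" "poly (pderiv f) (y * t i) \<noteq> 0"
  shows "err i = poly \<Omega> y / (w i * poly h (y * t i) * (\<Prod>l\<in>E - {i}. poly f (y * t l)))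
       \<and> err i = poly \<Omega> y * t i * poly (pderiv f) (y * t i) /
                  (poly (pderiv \<Lambda>) y * w i * poly h (y * t i))"
proof -
  define P where "P = (\<Prod>l\<in>E - {i}. poly f (y * t l))"
  have "P \<noteq> 0"
    unfolding P_def using assms(1) others by (auto simp: prod_zero_iff)
  have "poly \<Omega> y = (\<Sum>k\<in>E. (err k * w k * poly h (y * t k)) * (\<Prod>l\<in>E - {k}. poly f (y * t l)))"
    by (simp add: \<Omega> poly_sum poly_prod poly_pcompose mult_ac)
  also have "\<dots> = err i * w i * poly h (y * t i) * P"
    unfolding P_def using assms(1,2) root by (rule sum_prod_remove_eq_single)
  finally have \<Omega>_y: "poly \<Omega> y = err i * w i * poly h (y * t i) * P" .
  have "poly (pderiv \<Lambda>) y
          = (\<Sum>k\<in>E. (poly (pderiv f) (y * t k) * t k) * (\<Prod>l\<in>E - {k}. poly f (y * t l)))"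
    by (simp add: \<Lambda> pderiv_prod pderiv_pcompose pderiv_pCons poly_sum poly_prod
        poly_pcompose mult_ac)
  also have "\<dots> = poly (pderiv f) (y * t i) * t i * P"
    unfolding P_def using assms(1,2) root by (rule sum_prod_remove_eq_single)
  finally have \<Lambda>'_y: "poly (pderiv \<Lambda>) y = poly (pderiv f) (y * t i) * t i * P" .
  show ?thesis
    unfolding P_def[symmetric] \<Omega>_y \<Lambda>'_y using nonzero \<open>P \<noteq> 0\<close> by (simp add: field_simps)
qed

theorem proposition4:
  fixes p m q n n_l u s s_l r d_l \<mu> \<kappa> :: nat
    and e :: int
    and Fq Fql Fqs Fqls :: "'a::{field,finite} set"
    and \<alpha> \<beta> :: 'a
    and C L :: "'a poly set"
    and a f h \<Lambda> \<Omega> :: "'a poly"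
    and Z E :: "nat set"
    and err :: "nat \<Rightarrow> 'a"
    and \<gamma> :: "nat \<Rightarrow> 'a"
  assumes q_def: "prime p" "m \<ge> 1" "q = p ^ m"
    and pos: "n \<ge> 1" "n_l \<ge> 1" "u \<ge> 1" "s \<ge> 1" "s_l \<ge> 1"
    and r_def: "r = lcm s (u * s_l)"
    and card_field: "card (UNIV :: 'a set) = q ^ r"
    and Fq: "is_subfield Fq" "card Fq = q"
    and Fql: "is_subfield Fql" "card Fql = q ^ u"
    and Fqs: "is_subfield Fqs" "card Fqs = q ^ s"
    and Fqls: "is_subfield Fqls" "card Fqls = q ^ (u * s_l)"
    and coprime_nq: "coprime n q"
    and coprime_nlql: "coprime n_l (q ^ u)"
    and coprime_nnl: "coprime n n_l"
    and C: "cyclic_code Fq n C"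
    and L: "cyclic_code Fql n_l L"
    and dl: "d_l = min_distance L"
    and alpha: "\<alpha> \<in> Fqs" "mult_order_is \<alpha> n"
    and beta: "\<beta> \<in> Fqls" "mult_order_is \<beta> n_l"
    and nzl: "nonzero_locator_with C L \<alpha> \<beta> \<mu> e"
    and a: "a \<in> L" "Z = support a" "card Z = d_l"
    and f_def: "f = (\<Prod>j\<in>Z. [:1, - (\<beta> ^ j):])"
    and h_def: "h = (\<Sum>j\<in>Z. smult (coeff a j) (\<Prod>l\<in>Z - {j}. [:1, - (\<beta> ^ l):]))"
    and kappa: "\<kappa> \<in> Z"
    and gamma: "\<And>i. i < n \<Longrightarrow> \<gamma> i = inverse (\<beta> ^ \<kappa>) * inverse (\<alpha> ^ i)"
    and E: "E \<subseteq> {0..<n}"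
    and err: "\<And>i. i \<in> E \<Longrightarrow> err i \<in> Fq"
    and Lambda_def: "\<Lambda> = (\<Prod>i\<in>E. pcompose f [:0, \<alpha> ^ i:])"
    and Omega_def: "\<Omega> = (\<Sum>i\<in>E. smult (err i * \<alpha> powi (int i * e))
                       (pcompose h [:0, \<alpha> ^ i:] * (\<Prod>l\<in>E - {i}. pcompose f [:0, \<alpha> ^ l:])))"
  shows "\<forall>i\<in>E.
     err i = poly \<Omega> (\<gamma> i) /
       (\<alpha> powi (int i * e) * poly h (\<gamma> i * \<alpha> ^ i) * (\<Prod>l\<in>E - {i}. poly f (\<gamma> i * \<alpha> ^ l)))
   \<and> err i = poly \<Omega> (\<gamma> i) * \<alpha> ^ i * poly (pderiv f) (\<gamma> i * \<alpha> ^ i) /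
       (poly (pderiv \<Lambda>) (\<gamma> i) * \<alpha> powi (int i * e) * poly h (\<gamma> i * \<alpha> ^ i))"
proof
  fix i assume "i \<in> E"
  have "degree a < n_l" using a(1) L unfolding cyclic_code_def by blast
  then have Z_less: "j < n_l" if "j \<in> Z" for j
    using that a(2) le_degree unfolding support_def by fastforce
  then have "finite Z" by (meson finite_lessThan finite_subset lessThan_iff subsetI)
  have "inj_on (\<lambda>j. \<beta> ^ j) Z"
    using beta(2) Z_less by (auto intro: inj_onI mult_order_is_pow_inj)
  have \<alpha>0: "\<alpha> \<noteq> 0" and \<beta>0: "\<beta> ^ \<kappa> \<noteq> 0"
    using alpha(2) beta(2) by (simp_all add: mult_order_is_nonzero)
  have x0: "\<gamma> i * \<alpha> ^ i = inverse (\<beta> ^ \<kappa>)"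
    using gamma \<open>i \<in> E\<close> E \<alpha>0 by auto
  have "poly f (\<gamma> i * \<alpha> ^ l) \<noteq> 0" if "l \<in> E" "l \<noteq> i" for l
    using that \<open>i \<in> E\<close> E x0 \<beta>0 \<open>finite Z\<close> unfolding f_def
    by (intro poly_prod_linear_factors_at_other_power_nonzero[OF alpha(2) beta(2) coprime_nnl,
          where \<kappa> = \<kappa>]) auto
  moreover have "poly f (\<gamma> i * \<alpha> ^ i) = 0"
    using kappa \<open>finite Z\<close> \<beta>0 unfolding x0 f_def poly_prod_linear_factors_eq_0_iff[OF \<open>finite Z\<close>]
    by (intro bexI[of _ \<kappa>]) simp_all
  moreover have "coeff a \<kappa> \<noteq> 0" using kappa a(2) unfolding support_def by auto
  ultimately show "err i = poly \<Omega> (\<gamma> i) /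
       (\<alpha> powi (int i * e) * poly h (\<gamma> i * \<alpha> ^ i) * (\<Prod>l\<in>E - {i}. poly f (\<gamma> i * \<alpha> ^ l)))
   \<and> err i = poly \<Omega> (\<gamma> i) * \<alpha> ^ i * poly (pderiv f) (\<gamma> i * \<alpha> ^ i) /
       (poly (pderiv \<Lambda>) (\<gamma> i) * \<alpha> powi (int i * e) * poly h (\<gamma> i * \<alpha> ^ i))"
    using \<open>i \<in> E\<close> E finite_subset \<alpha>0 \<beta>0
      prod_linear_factors_remove_root_nonzero[OF \<open>finite Z\<close> kappa \<open>inj_on _ Z\<close>]
      poly_pderiv_prod_linear_factors_root[OF \<open>finite Z\<close> kappa, of "\<lambda>j. \<beta> ^ j"]
      poly_sum_smult_prod_linear_factors_root[OF \<open>finite Z\<close> kappa, of "\<lambda>j. \<beta> ^ j"]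
    by (intro error_evaluator_at_root[OF _ _ Lambda_def Omega_def])
       (auto simp: x0 f_def h_def)
qed

end
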